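(* Let $a>0$ and $n,k$ be integers with $1\le k\le n/2$, and let $a_0,\dots,a_n$ be integers. Say a prime $p$ satisfies (C) if $p\mid\prod_{i=1}^k(a+n-k+i)$ and $p\nmid a_0a_n$. (i) If there is a prime $p>a+k$ satisfying (C), then $f_{n,a}(x)$ has no factor of degree $k$ in $\mathbb{Q}[x]$. (ii) Let $p\ge k+2$ be a prime satisfying (C). Put $r_p=\lfloor k/2\rfloor$ if $p<2k$ and $r_p=p-1$ if $p\ge 2k$, and $\mathcal{A}_p=\bigcup_{i=1}^{r_p}\big([ip-k,\,ip-1]\cap\mathbb{Z}_{>0}\big)\cup\{j\in\mathbb{Z}: j>pr_p\}$. If $a\notin\mathcal{A}_p$, then $f_{n,a}(x)$ has no factor of degree $k$ in $\mathbb{Q}[x]$. (iii) Let $P_1>P_2>\cdots>P_s\ge k+2$ be primes satisfying (C), and let $\{Q_1,\dots,Q_g\}\subseteq\{P_1,\dots,P_s\}$. Put $\mathcal{B}\{Q_1,\dots,Q_g\}=\bigcap_{l=1}^{g}\mathcal{A}_{Q_l}$ with $\mathcal{A}_{Q_l}$ as in (ii). If $a\notin\mathcal{B}\{Q_1,\dots,Q_g\}$, then $f_{n,a}(x)$ has no factor of degree $k$ in $\mathbb{Q}[x]$.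
   Context: Here $a$ is an integer. For integers $n\ge 1$, $a\ge 0$ and integers $a_0,\dots,a_n$, $f_{n,a}(x)=\sum_{j=0}^{n} a_j\frac{x^j}{(j+a)!}$. *)

theory Defs
  imports "HOL-Computational_Algebra.Polynomial"
begin

definition f_poly :: "nat \<Rightarrow> nat \<Rightarrow> (nat \<Rightarrow> int) \<Rightarrow> rat poly" where
  "f_poly n a c = (\<Sum>j\<le>n. monom (of_int (c j) / fact (j + a)) j)"

definition cond_C :: "nat \<Rightarrow> nat \<Rightarrow> nat \<Rightarrow> (nat \<Rightarrow> int) \<Rightarrow> nat \<Rightarrow> bool" where
  "cond_C n k a c p \<longleftrightarrow> prime p \<and> p dvd (\<Prod>i=1..k. a + n - k + i) \<and> \<not> int p dvd (c 0 * c n)"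

definition r_p :: "nat \<Rightarrow> nat \<Rightarrow> nat" where
  "r_p k p = (if p < 2 * k then k div 2 else p - 1)"

definition A_p :: "nat \<Rightarrow> nat \<Rightarrow> int set" where
  "A_p k p = (\<Union>i\<in>{1..r_p k p}. {int (i * p) - int k .. int (i * p) - 1} \<inter> {0<..})
             \<union> {j. j > int (p * r_p k p)}"

definition has_factor_of_degree :: "rat poly \<Rightarrow> nat \<Rightarrow> bool" where
  "has_factor_of_degree f k \<longleftrightarrow> (\<exists>g. degree g = k \<and> g dvd f)"

end

(*
  Clearing denominators, F = (n+a)! f_{n,a} has the integer coefficients
  c_j (a+j+1)(a+j+2)...(a+n), and by Gauss's lemma a factor of degree k of f_{n,a}
  yields F = G H over the integers with deg G = k.  The prime p divides every
  coefficient F_j with j <= n-k but not c_n.  If p does not divide G(0), the first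
  coefficient of H not divisible by p produces such an F_j that p does not divide.
  If p divides G(0), the Newton polygon of G has an edge of slope at least 1/k at
  its left end, and Dumas' theorem transfers it to F = G H: some j >= 1 has
  k v_p(F_j) + j <= k v_p(F_0).  This contradicts the estimate
  k v_p((a+1)(a+2)...(a+j)) < j for all j >= 1, which is where a \<notin> A_p enters;
  writing a = q p + rho, it is proved from Legendre's recursion
  v_p(m!) = m div p + v_p((m div p)!).
*)

theory Submission
  imports Defs "Berlekamp_Zassenhaus.Factor_Bound"
begin

(* The polynomial constants of HOL-Algebra, loaded by Factor_Bound, would shadow those of
   HOL-Computational_Algebra. *)
hide_const (open) up_ring.monom up_ring.coeff module.smult

section \<open>The p-adic valuation of products of consecutive integers\<close>

lemma multiplicity_of_nat_int:
  fixes p x :: nat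
  shows "multiplicity (int p) (int x) = multiplicity p x"
proof -
  have "int p ^ n dvd int x \<longleftrightarrow> p ^ n dvd x" for n
    using int_dvd_int_iff[of "p ^ n" x] by simp
  then show ?thesis
    unfolding multiplicity_def by simp
qed

lemma multiplicity_prod_Suc:
  fixes f :: "nat \<Rightarrow> nat"
  assumes "prime p" and "\<And>i. 1 \<le> i \<Longrightarrow> f i \<noteq> 0"
  shows "multiplicity p (\<Prod>i=1..Suc j. f i) = multiplicity p (\<Prod>i=1..j. f i) + multiplicity p (f (Suc j))"
proof -
  have "(\<Prod>i=1..Suc j. f i) = (\<Prod>i=1..j. f i) * f (Suc j)"
    by (simp add: prod.nat_ivl_Suc')
  then show ?thesis
    using assms by (simp add: prime_elem_multiplicity_mult_distrib prod_zero_iff)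
qed

(* Only the multiples p (q + 1), ..., p (q + (j + rho) div p) among the factors contribute. *)
lemma multiplicity_prod_consecutive:
  fixes p q rho :: nat
  assumes p: "prime p" and rho: "rho < p"
  shows "multiplicity p (\<Prod>i=1..j. q * p + rho + i)
       = (j + rho) div p + multiplicity p (\<Prod>i=1..(j + rho) div p. q + i)"
proof (induction j)
  case 0
  then show ?case using rho by simp
next
  case (Suc j)
  let ?v = "multiplicity p"
  have "?v (\<Prod>i=1..Suc j. q * p + rho + i) = ?v (\<Prod>i=1..j. q * p + rho + i) + ?v (q * p + rho + Suc j)"
    by (rule multiplicity_prod_Suc[OF p]) simp
  moreover have "?v (q * p + rho + Suc j) = (if p dvd Suc j + rho then Suc (?v (q + (Suc j + rho) div p)) else 0)"
  proof (cases "p dvd Suc j + rho")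
    case True
    then have "q * p + rho + Suc j = p * (q + (Suc j + rho) div p)"
      by (auto simp: algebra_simps elim!: dvdE)
    moreover have "(Suc j + rho) div p \<noteq> 0"
      using True by (simp add: dvd_div_eq_0_iff)
    then have "?v (p * (q + (Suc j + rho) div p)) = Suc (?v (q + (Suc j + rho) div p))"
      using p by (intro multiplicity_times_same) (auto simp: not_prime_unit)
    ultimately show ?thesis
      using True by simp
  next
    case False
    then have "\<not> p dvd q * p + rho + Suc j"
      by (metis add.commute add.left_commute dvd_add_right_iff dvd_triv_right)
    then show ?thesis using False by (simp add: not_dvd_imp_multiplicity_0)
  qed
  moreover have "(Suc j + rho) div p = (if p dvd Suc j + rho then Suc ((j + rho) div p) else (j + rho) div p)"
    using div_Suc[of "j + rho" p] by (simp add: dvd_eq_mod_eq_0)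
  moreover have "?v (\<Prod>i=1..Suc m. q + i) = ?v (\<Prod>i=1..m. q + i) + ?v (q + Suc m)" for m
    by (rule multiplicity_prod_Suc[OF p]) simp
  ultimately show ?case using Suc.IH by auto
qed

lemma multiplicity_fact_rec:
  assumes "prime p"
  shows "multiplicity p (fact m :: nat) = m div p + multiplicity p (fact (m div p) :: nat)"
  using multiplicity_prod_consecutive[OF assms, of 0 0 m] prime_gt_0_nat[OF assms]
  by (simp add: fact_prod)

lemma multiplicity_fact_le:
  assumes p: "prime p" and "m \<ge> 1"
  shows "(p - 1) * multiplicity p (fact m :: nat) \<le> m - 1"
  using assms(2)
proof (induction m rule: less_induct)
  case (less m)
  define M where "M = m div p"
  have rec: "multiplicity p (fact m :: nat) = M + multiplicity p (fact M :: nat)"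
    unfolding M_def by (rule multiplicity_fact_rec[OF p])
  show ?case
  proof (cases "M = 0")
    case True
    then show ?thesis using rec by simp
  next
    case False
    have p1: "p > 1" using p prime_gt_1_nat by blast
    have "M < m" unfolding M_def using p1 less.prems by simp
    then have IH: "(p - 1) * multiplicity p (fact M :: nat) \<le> M - 1" using less.IH False by simp
    have "(p - 1) * multiplicity p (fact m :: nat) = (p - 1) * M + (p - 1) * multiplicity p (fact M :: nat)"
      using rec by (simp add: algebra_simps)
    also have "\<dots> \<le> (p - 1) * M + (M - 1)" using IH by simp
    also have "\<dots> = p * M - 1" using False p1 by (cases p) (auto simp: algebra_simps)
    also have "\<dots> \<le> m - 1" unfolding M_def by (simp add: diff_le_mono)
    finally show ?thesis .
  qed
qed

section \<open>Digits of a outside the exceptional set\<close>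

lemma r_p_cases:
  assumes "prime p" and "k + 2 \<le> p"
  shows "(p < 2 * k \<and> 2 * r_p k p \<le> k) \<or> (2 * k < p \<and> r_p k p = p - 1)"
proof -
  have "p \<noteq> 2 * k"
    using assms prime_odd_nat[of p] by auto
  then show ?thesis
    unfolding r_p_def by auto
qed

lemma digits_of_not_in_A_p:
  fixes p k a :: nat
  assumes "0 < p" and "0 < a" and "int a \<notin> A_p k p"
  shows "(a div p < r_p k p \<and> a mod p + k + 1 \<le> p) \<or> (a div p = r_p k p \<and> a mod p = 0)"
proof -
  define q where "q = a div p"
  define rho where "rho = a mod p"
  have a: "a = q * p + rho" and rho: "rho < p"
    using assms(1) unfolding q_def rho_def by simp_all
  have "a \<le> p * r_p k p"
    using assms(3) unfolding A_p_def by (auto simp flip: of_nat_mult)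
  then have "q * p \<le> p * r_p k p"
    using a by linarith
  then have q_le: "q \<le> r_p k p"
    using assms(1) by (metis mult.commute mult_le_cancel2)
  show ?thesis
  proof (cases "q < r_p k p")
    case True
    have "int a \<notin> {int ((q + 1) * p) - int k .. int ((q + 1) * p) - 1} \<inter> {0<..}"
      using assms(3) True unfolding A_p_def
      by (metis (no_types, lifting) UN_iff UnI1 Suc_leI atLeastAtMost_iff le_add2 Suc_eq_plus1)
    moreover have "int a \<le> int ((q + 1) * p) - 1"
      using a rho by simp
    ultimately have "int a < int ((q + 1) * p) - int k"
      using assms(2) by auto
    then have "rho + k + 1 \<le> p"
      using a by (simp add: algebra_simps)
    then show ?thesis using True unfolding q_def rho_def by simp
  next
    case False
    then have "q = r_p k p" using q_le by simp
    then show ?thesis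
      using \<open>a \<le> p * r_p k p\<close> a unfolding q_def rho_def by (simp add: mult.commute)
  qed
qed

lemma not_in_A_p_if_large:
  assumes "a + k < p" and "0 < a" and "1 \<le> k"
  shows "int a \<notin> A_p k p"
proof -
  have "1 \<le> r_p k p"
    using assms unfolding r_p_def by auto
  then have "a \<le> p * r_p k p"
    using assms(1) by (metis add_leD1 le_trans less_or_eq_imp_le mult_le_mono2 nat_mult_1_right)
  moreover have "int a < int (i * p) - int k" if "1 \<le> i" for i :: nat
  proof -
    have "p \<le> i * p" using that by simp
    then show ?thesis using assms(1) by linarith
  qed
  ultimately show ?thesis
    unfolding A_p_def by fastforce
qed

(* Below, a = q p + rho and r = r_p k p: C is what a \<notin> A_p says about the digits q and rho,
   and R lists the two cases of r_p.  The valuation of (a+1)...(a+j) is M + W, where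
   M = (j + rho) div p and W is the valuation of (q+1)...(q+M). *)
lemma digit_bound_gap:
  fixes k p q rho M :: int
  assumes "1 \<le> k" "k + 2 \<le> p" "k \<le> (p - q - 1) * (p - k)" "rho + k + 1 \<le> p" "p \<le> M + q"
  shows "k * (M + q - 1) < (p - 1) * (M * (p - k) - rho)"
proof -
  define t where "t = M - (p - q)"
  have "(p - q) * (p - k) = (p - q - 1) * (p - k) + (p - k)"
    by (simp add: algebra_simps)
  then have "(p - 1) * k < (p - 1) * ((p - q) * (p - k) - rho)"
    using assms by (intro mult_strict_left_mono) auto
  moreover have "k * 1 \<le> (p - 1) * (p - k)"
    using assms by (intro mult_mono) auto
  then have "k * t \<le> (p - 1) * (p - k) * t"
    using assms unfolding t_def by (intro mult_right_mono) auto
  moreover have "k * (M + q - 1) = (p - 1) * k + k * t"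
    and "(p - 1) * (M * (p - k) - rho) = (p - 1) * ((p - q) * (p - k) - rho) + (p - 1) * (p - k) * t"
    unfolding t_def by (simp_all add: algebra_simps)
  ultimately show ?thesis by linarith
qed

lemma digit_bound_endpoint:
  fixes k p r M :: int
  assumes "1 \<le> k" "k + 2 \<le> p" "p \<le> M + r"
    and "(p < 2 * k \<and> 2 * r \<le> k) \<or> (2 * k < p \<and> r = p - 1)"
  shows "k * (M + r - 1) < (p - 1) * (M * (p - k))"
  using assms(4)
proof
  assume *: "p < 2 * k \<and> 2 * r \<le> k"
  then have "r \<le> M" using assms by linarith
  then have "k * r \<le> k * M"
    using assms(1) by (simp add: mult_left_mono)
  moreover have "k * (M + r - 1) = k * M + k * r - k" and "2 * k * M = k * M + k * M"
    by (simp_all add: algebra_simps)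
  ultimately have "k * (M + r - 1) < 2 * k * M"
    using assms(1) by linarith
  also have "\<dots> \<le> (p - 1) * (p - k) * M"
  proof -
    have "k * 2 \<le> (p - 1) * (p - k)"
      using assms by (intro mult_mono) auto
    then show ?thesis
      using \<open>r \<le> M\<close> assms * by (intro mult_right_mono) auto
  qed
  finally show ?thesis by (simp add: algebra_simps)
next
  assume *: "2 * k < p \<and> r = p - 1"
  then have M: "1 \<le> M" using assms by linarith
  have "k * (M + r - 1) = k * M + k * (p - 2)" unfolding *[THEN conjunct2] by (simp add: algebra_simps)
  also have "\<dots> \<le> k * M + k * (p - 2) * M" using M assms by simp
  also have "\<dots> < (p - 1) * (k + 1) * M" using M assms by (simp add: algebra_simps)
  also have "\<dots> \<le> (p - 1) * (p - k) * M" using M assms * by (intro mult_right_mono mult_left_mono) auto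
  finally show ?thesis by (simp add: algebra_simps)
qed

lemma digit_bound:
  fixes k p q r rho M :: int
  assumes k: "1 \<le> k" and p: "k + 2 \<le> p" and "p \<le> M + q"
    and C: "(q < r \<and> rho + k + 1 \<le> p) \<or> (q = r \<and> rho = 0)"
    and R: "(p < 2 * k \<and> 2 * r \<le> k) \<or> (2 * k < p \<and> r = p - 1)"
  shows "k * (M + q - 1) < (p - 1) * (M * (p - k) - rho)"
  using C
proof
  assume C: "q < r \<and> rho + k + 1 \<le> p"
  have "k \<le> (p - q - 1) * (p - k)"
    using R
  proof
    assume "p < 2 * k \<and> 2 * r \<le> k"
    moreover have "(p - q - 1) * 2 \<le> (p - q - 1) * (p - k)"
      using calculation C p by (intro mult_left_mono) auto
    moreover have "(p - q - 1) * 2 = 2 * p - 2 * q - 2" by simp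
    ultimately show ?thesis using C p by linarith
  next
    assume "2 * k < p \<and> r = p - 1"
    then have "1 * k \<le> (p - q - 1) * (p - k)"
      using C k by (intro mult_mono) auto
    then show ?thesis by simp
  qed
  then show ?thesis
    using digit_bound_gap assms C by blast
qed (use digit_bound_endpoint assms in auto)

lemma valuation_digit_bound:
  fixes k p q r rho M W :: int
  assumes k: "1 \<le> k" and p: "k + 2 \<le> p" and M: "1 \<le> M"
    and C: "(q < r \<and> rho + k + 1 \<le> p) \<or> (q = r \<and> rho = 0)"
    and R: "(p < 2 * k \<and> 2 * r \<le> k) \<or> (2 * k < p \<and> r = p - 1)"
    and W: "W = 0 \<or> (p \<le> M + q \<and> (p - 1) * W < M + q)"
  shows "k * W < M * (p - k) - rho"
  using W
proof
  assume "W = 0"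
  moreover have "p - k \<le> M * (p - k)" and "rho + k + 1 \<le> p"
    using M p C by auto
  ultimately show ?thesis by simp
next
  assume W: "p \<le> M + q \<and> (p - 1) * W < M + q"
  then have "k * (M + q - 1) < (p - 1) * (M * (p - k) - rho)"
    using digit_bound[OF k p _ C R] by blast
  moreover have "(p - 1) * (k * W) = k * ((p - 1) * W)"
    by (simp add: algebra_simps)
  moreover have "k * ((p - 1) * W) \<le> k * (M + q - 1)"
    using W k by (intro mult_left_mono) auto
  ultimately have "(p - 1) * (k * W) < (p - 1) * (M * (p - k) - rho)"
    by linarith
  then show ?thesis
    using p k by (simp add: mult_less_cancel_left)
qed

lemma prod_consecutive_dvd_fact:
  "(\<Prod>i=1..M. q + i) dvd (fact (M + q) :: nat)"
proof -
  have "(\<Prod>i=1..M. q + i) = \<Prod>{Suc q..M + q}"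
    using prod.shift_bounds_cl_nat_ivl[of "\<lambda>i. i" 1 q M] by (simp add: add.commute)
  then show ?thesis
    using fact_eq_fact_times[of q "M + q"] by simp
qed

lemma multiplicity_prod_consecutive_bound:
  fixes p q M :: nat
  assumes p: "prime p" and "M \<noteq> 0"
  defines "W \<equiv> multiplicity p (\<Prod>i=1..M. q + i)"
  shows "W = 0 \<or> (p \<le> M + q \<and> (p - 1) * W < M + q)"
proof (cases "W = 0")
  case False
  have W: "W \<le> multiplicity p (fact (M + q) :: nat)"
    unfolding W_def by (rule dvd_imp_multiplicity_le[OF prod_consecutive_dvd_fact]) simp
  moreover have "(p - 1) * multiplicity p (fact (M + q) :: nat) \<le> M + q - 1"
    using multiplicity_fact_le[OF p] assms(2) by simp
  ultimately have "(p - 1) * W < M + q"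
    using assms(2) mult_le_mono2[of W "multiplicity p (fact (M + q) :: nat)" "p - 1"] by linarith
  moreover have "p dvd fact (M + q)"
    using False W not_dvd_imp_multiplicity_0[of p "fact (M + q) :: nat"] by auto
  then have "p \<le> M + q"
    using prime_dvd_fact_iff[OF p] by simp
  ultimately show ?thesis by simp
qed simp

lemma multiplicity_prod_consecutive_lt:
  fixes p k a j :: nat
  assumes p: "prime p" and k: "1 \<le> k" "k + 2 \<le> p" and a: "0 < a" "int a \<notin> A_p k p"
    and j: "1 \<le> j"
  shows "k * multiplicity p (\<Prod>i=1..j. a + i) < j"
proof -
  define q where "q = a div p"
  define rho where "rho = a mod p"
  define M where "M = (j + rho) div p"
  define W where "W = multiplicity p (\<Prod>i=1..M. q + i)"
  have p0: "0 < p" using p prime_gt_0_nat by blast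
  have v: "multiplicity p (\<Prod>i=1..j. a + i) = M + W"
    using multiplicity_prod_consecutive[OF p, of rho q j] p0
    unfolding M_def W_def q_def rho_def by (simp add: mult.commute)
  show ?thesis
  proof (cases "M = 0")
    case True
    then show ?thesis using v j unfolding W_def by simp
  next
    case False
    have "W = 0 \<or> (p \<le> M + q \<and> (p - 1) * W < M + q)"
      unfolding W_def using multiplicity_prod_consecutive_bound[OF p False] .
    moreover have "int ((p - 1) * W) = (int p - 1) * int W"
      using p0 by (simp add: of_nat_diff)
    ultimately have "int W = 0 \<or> (int p \<le> int M + int q \<and> (int p - 1) * int W < int M + int q)"
      by linarith
    moreover have "(int q < int (r_p k p) \<and> int rho + int k + 1 \<le> int p) \<or> (int q = int (r_p k p) \<and> int rho = 0)"
      using digits_of_not_in_A_p[OF p0 a] unfolding q_def rho_def by auto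
    moreover have "(int p < 2 * int k \<and> 2 * int (r_p k p) \<le> int k) \<or> (2 * int k < int p \<and> int (r_p k p) = int p - 1)"
      using r_p_cases[OF p k(2)] p0 by auto
    ultimately have "int k * int W < int M * (int p - int k) - int rho"
      using k False by (intro valuation_digit_bound) auto
    moreover have "M * p \<le> j + rho"
      unfolding M_def by (rule div_times_less_eq_dividend)
    then have "int M * int p \<le> int j + int rho"
      by (metis of_nat_add of_nat_le_iff of_nat_mult)
    ultimately have "int k * (int M + int W) < int j"
      by (simp add: algebra_simps)
    then have "k * (M + W) < j"
      by (metis of_nat_add of_nat_less_iff of_nat_mult)
    then show ?thesis
      using v by simp
  qed
qed

section \<open>Newton polygons of products\<close>

lemma not_dvd_sum_single:
  fixes f :: "'b \<Rightarrow> 'a::comm_ring_1"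
  assumes "finite A" "x \<in> A" "\<not> d dvd f x" "\<And>y. y \<in> A \<Longrightarrow> y \<noteq> x \<Longrightarrow> d dvd f y"
  shows "\<not> d dvd sum f A"
proof
  assume "d dvd sum f A"
  moreover have "sum f A = f x + sum f (A - {x})"
    using assms(1,2) by (simp add: sum.remove)
  moreover have "d dvd sum f (A - {x})"
    using assms(4) by (intro dvd_sum) auto
  ultimately show False
    using assms(3) by (simp add: dvd_add_left_iff)
qed

definition is_last_argmin :: "('a \<Rightarrow> 'b::linorder) \<Rightarrow> 'a::linorder set \<Rightarrow> 'a \<Rightarrow> bool" where
  "is_last_argmin u S i \<longleftrightarrow> i \<in> S \<and> (\<forall>j\<in>S. u i \<le> u j) \<and> (\<forall>j\<in>S. i < j \<longrightarrow> u i < u j)"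

lemma ex_last_argmin:
  assumes "finite S" and "S \<noteq> {}"
  shows "\<exists>i. is_last_argmin u S i"
proof -
  define I where "I = {i \<in> S. u i = Min (u ` S)}"
  have "Min (u ` S) \<in> u ` S"
    using assms by (intro Min_in) auto
  then obtain i where "i \<in> S" "u i = Min (u ` S)"
    by auto
  then have "I \<noteq> {}"
    unfolding I_def by auto
  moreover have "finite I"
    using assms unfolding I_def by simp
  ultimately have "Max I \<in> I" and max: "\<And>j. j \<in> I \<Longrightarrow> j \<le> Max I"
    by simp_all
  then have i: "Max I \<in> S" "u (Max I) = Min (u ` S)"
    unfolding I_def by simp_all
  have le: "u (Max I) \<le> u j" if "j \<in> S" for j
    using i assms that by simp
  have "u (Max I) < u j" if "j \<in> S" "Max I < j" for j
  proof -
    have "j \<notin> I" using max that(2) by fastforce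
    then have "u j \<noteq> u (Max I)"
      using that(1) i(2) unfolding I_def by simp
    then show ?thesis
      using le[OF that(1)] by simp
  qed
  then show ?thesis
    using i le unfolding is_last_argmin_def by blast
qed

lemma last_argmin_add_less:
  fixes u w :: "nat \<Rightarrow> 'b::linordered_cancel_ab_semigroup_add"
  assumes i0: "is_last_argmin u S i0" and j0: "is_last_argmin w T j0"
    and "y \<in> S" "i0 + j0 - y \<in> T" "y \<le> i0 + j0" "y \<noteq> i0"
  shows "u i0 + w j0 < u y + w (i0 + j0 - y)"
proof (cases "i0 < y")
  case True
  then have "u i0 < u y" and "w j0 \<le> w (i0 + j0 - y)"
    using i0 j0 assms(3,4) unfolding is_last_argmin_def by auto
  then show ?thesis by (rule add_less_le_mono)
next
  case False
  then have "j0 < i0 + j0 - y"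
    using assms(5,6) by simp
  then have "u i0 \<le> u y" and "w j0 < w (i0 + j0 - y)"
    using i0 j0 assms(3,4) unfolding is_last_argmin_def by auto
  then show ?thesis by (rule add_le_less_mono)
qed

(* The minimisers of l v_P(f_i) + i over the support of f are the vertices of the Newton
   polygon of f on its supporting line of slope -1/l, scaled by l to stay in nat. *)
definition newton_weight :: "'a::factorial_semiring \<Rightarrow> nat \<Rightarrow> 'a poly \<Rightarrow> nat \<Rightarrow> nat" where
  "newton_weight P l f i = l * multiplicity P (coeff f i) + i"

lemma power_dvd_coeff_off_last_argmin:
  fixes f g :: "'a::{factorial_semiring,idom} poly"
  assumes P: "prime_elem P" and l: "0 < l"
    and i0: "is_last_argmin (newton_weight P l f) {i. coeff f i \<noteq> 0} i0"
    and j0: "is_last_argmin (newton_weight P l g) {j. coeff g j \<noteq> 0} j0"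
    and y: "y \<le> i0 + j0" "y \<noteq> i0"
  defines "N \<equiv> multiplicity P (coeff f i0) + multiplicity P (coeff g j0)"
  shows "P ^ Suc N dvd coeff f y * coeff g (i0 + j0 - y)"
proof (cases "coeff f y = 0 \<or> coeff g (i0 + j0 - y) = 0")
  case False
  then have fy: "coeff f y \<noteq> 0" and gy: "coeff g (i0 + j0 - y) \<noteq> 0" by auto
  have "newton_weight P l f i0 + newton_weight P l g j0
      < newton_weight P l f y + newton_weight P l g (i0 + j0 - y)"
    using last_argmin_add_less[OF i0 j0] fy gy y by simp
  then have "l * N < l * multiplicity P (coeff f y * coeff g (i0 + j0 - y))"
    using y prime_elem_multiplicity_mult_distrib[OF P fy gy]
    unfolding newton_weight_def N_def by (simp add: algebra_simps)
  then have "Suc N \<le> multiplicity P (coeff f y * coeff g (i0 + j0 - y))"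
    by simp
  then show ?thesis
    using fy gy P power_dvd_iff_le_multiplicity[of "coeff f y * coeff g (i0 + j0 - y)" P "Suc N"]
    by (simp add: prime_elem_not_unit)
qed auto

(* Dumas: of the terms of coeff (f * g) (i0 + j0), only f_i0 g_j0 has minimal weight. *)
lemma multiplicity_coeff_mult_last_argmin:
  fixes f g :: "'a::{factorial_semiring,idom} poly"
  assumes P: "prime_elem P" and l: "0 < l"
    and i0: "is_last_argmin (newton_weight P l f) {i. coeff f i \<noteq> 0} i0"
    and j0: "is_last_argmin (newton_weight P l g) {j. coeff g j \<noteq> 0} j0"
  shows "coeff (f * g) (i0 + j0) \<noteq> 0"
    and "multiplicity P (coeff (f * g) (i0 + j0)) = multiplicity P (coeff f i0) + multiplicity P (coeff g j0)"
proof -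
  let ?v = "multiplicity P"
  define m where "m = i0 + j0"
  define N where "N = ?v (coeff f i0) + ?v (coeff g j0)"
  have nu: "\<not> is_unit P" using P by (simp add: prime_elem_not_unit)
  have "coeff f i0 \<noteq> 0" and "coeff g j0 \<noteq> 0"
    using i0 j0 unfolding is_last_argmin_def by auto
  then have N: "?v (coeff f i0 * coeff g j0) = N" and "coeff f i0 * coeff g j0 \<noteq> 0"
    unfolding N_def using prime_elem_multiplicity_mult_distrib[OF P] by simp_all
  have high: "P ^ Suc N dvd coeff f y * coeff g (m - y)" if "y \<le> m" "y \<noteq> i0" for y
    using power_dvd_coeff_off_last_argmin[OF P l i0 j0] that unfolding m_def N_def by simp
  have "P ^ N dvd coeff (f * g) m"
    unfolding coeff_mult
  proof (rule dvd_sum)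
    fix y assume y: "y \<in> {..m}"
    show "P ^ N dvd coeff f y * coeff g (m - y)"
    proof (cases "y = i0")
      case True
      then show ?thesis
        using N multiplicity_dvd[of P "coeff f i0 * coeff g j0"] unfolding m_def by simp
    next
      case False
      then have "P ^ Suc N dvd coeff f y * coeff g (m - y)"
        using y by (intro high) auto
      then show ?thesis
        by (rule dvd_trans[rotated]) (rule le_imp_power_dvd, simp)
    qed
  qed
  moreover have "\<not> P ^ Suc N dvd coeff (f * g) m"
    unfolding coeff_mult
  proof (rule not_dvd_sum_single[where x = i0])
    show "\<not> P ^ Suc N dvd coeff f i0 * coeff g (m - i0)"
      using N \<open>coeff f i0 * coeff g j0 \<noteq> 0\<close> nu
        power_dvd_iff_le_multiplicity[of "coeff f i0 * coeff g j0" P "Suc N"]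
      unfolding m_def by simp
    show "P ^ Suc N dvd coeff f y * coeff g (m - y)" if "y \<in> {..m}" "y \<noteq> i0" for y
      using that by (intro high) auto
  qed (simp_all add: m_def)
  ultimately show "coeff (f * g) (i0 + j0) \<noteq> 0"
    and "?v (coeff (f * g) (i0 + j0)) = ?v (coeff f i0) + ?v (coeff g j0)"
    using multiplicity_eqI[of P N "coeff (f * g) m"] unfolding m_def N_def by auto
qed

lemma coeff_mult_below_newton_slope:
  fixes G H :: "'a::{factorial_semiring,idom} poly"
  assumes P: "prime_elem P" and G: "degree G = k" "1 \<le> k" "\<not> P dvd lead_coeff G"
    and G0: "P dvd coeff G 0" "coeff G 0 \<noteq> 0" and H0: "coeff H 0 \<noteq> 0"
  shows "\<exists>j\<ge>1. coeff (G * H) j \<noteq> 0 \<and> newton_weight P k (G * H) j \<le> newton_weight P k (G * H) 0"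
proof -
  let ?w = "newton_weight P k"
  have fin: "finite {i. coeff f i \<noteq> 0}" for f :: "'a poly"
    by (rule finite_subset[of _ "{..degree f}"]) (auto intro: le_degree)
  have "{i. coeff G i \<noteq> 0} \<noteq> {}" and "{j. coeff H j \<noteq> 0} \<noteq> {}"
    using G0 H0 by auto
  then obtain i0 j0 where i0: "is_last_argmin (?w G) {i. coeff G i \<noteq> 0} i0"
    and j0: "is_last_argmin (?w H) {j. coeff H j \<noteq> 0} j0"
    using ex_last_argmin[OF fin[of G], of "?w G"] ex_last_argmin[OF fin[of H], of "?w H"] by blast
  have nz: "coeff (G * H) (i0 + j0) \<noteq> 0"
    and v: "multiplicity P (coeff (G * H) (i0 + j0)) = multiplicity P (coeff G i0) + multiplicity P (coeff H j0)"
    using multiplicity_coeff_mult_last_argmin[OF P _ i0 j0] G(2) by auto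
  have "?w G i0 \<le> ?w G 0" and "?w H j0 \<le> ?w H 0"
    using i0 j0 G0 H0 unfolding is_last_argmin_def by auto
  moreover have "?w (G * H) 0 = ?w G 0 + ?w H 0"
    using P G0 H0 by (simp add: newton_weight_def coeff_mult_0 prime_elem_multiplicity_mult_distrib algebra_simps)
  moreover have "?w (G * H) (i0 + j0) = ?w G i0 + ?w H j0"
    using v by (simp add: newton_weight_def algebra_simps)
  moreover have "i0 \<noteq> 0" \<comment> \<open>the weight of G at k is k, at most its weight k v_P(G_0) at 0\<close>
  proof
    assume "i0 = 0"
    have "coeff G k \<noteq> 0" and vk: "multiplicity P (coeff G k) = 0"
      using G by (auto simp: not_dvd_imp_multiplicity_0)
    then have "?w G 0 < ?w G k"
      using i0 G(2) \<open>i0 = 0\<close> unfolding is_last_argmin_def by auto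
    moreover have "multiplicity P (coeff G 0) \<noteq> 0"
      using multiplicity_eq_zero_iff[OF G0(2) prime_elem_not_unit[OF P]] G0(1) by simp
    ultimately show False
      using vk unfolding newton_weight_def by simp
  qed
  ultimately show ?thesis
    using nz by (intro exI[of _ "i0 + j0"]) auto
qed

lemma coeff_mult_not_dvd:
  fixes G H :: "'a::{factorial_semiring,idom} poly"
  assumes P: "prime P" and "\<not> P dvd coeff G 0" and "\<not> P dvd lead_coeff H"
  shows "\<exists>j \<le> degree H. \<not> P dvd coeff (G * H) j"
proof -
  define j0 where "j0 = (LEAST j. \<not> P dvd coeff H j)"
  have j0: "\<not> P dvd coeff H j0"
    unfolding j0_def by (rule LeastI[of _ "degree H"]) (use assms(3) in simp)
  have "j0 \<le> degree H"
    unfolding j0_def by (rule Least_le) (use assms(3) in simp)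
  have below: "P dvd coeff H i" if "i < j0" for i
    using not_less_Least[OF that[unfolded j0_def]] by simp
  have "\<not> P dvd (\<Sum>i\<le>j0. coeff G i * coeff H (j0 - i))"
  proof (rule not_dvd_sum_single[where x = 0])
    show "\<not> P dvd coeff G 0 * coeff H (j0 - 0)"
      using P assms(2) j0 by (simp add: prime_dvd_mult_iff)
  qed (use below in auto)
  then show ?thesis
    using \<open>j0 \<le> degree H\<close> by (auto simp: coeff_mult)
qed

section \<open>Clearing the denominators of f\<close>

definition f_int_poly :: "nat \<Rightarrow> nat \<Rightarrow> (nat \<Rightarrow> int) \<Rightarrow> int poly" where
  "f_int_poly n a c = (\<Sum>j\<le>n. monom (c j * int (\<Prod>{j + a + 1..n + a})) j)"

lemma coeff_f_int_poly:
  "coeff (f_int_poly n a c) j = (if j \<le> n then c j * int (\<Prod>{j + a + 1..n + a}) else 0)"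
  unfolding f_int_poly_def by (simp add: coeff_sum coeff_monom)

lemma of_int_f_int_poly:
  "map_poly of_int (f_int_poly n a c) = smult (fact (n + a)) (f_poly n a c)"
proof (rule poly_eqI)
  fix j
  have "(fact (n + a) :: rat) = fact (j + a) * of_nat (\<Prod>{j + a + 1..n + a})" if "j \<le> n"
  proof -
    have "fact (n + a) = (fact (j + a) * \<Prod>{j + a + 1..n + a} :: nat)"
      using fact_eq_fact_times[of "j + a" "n + a"] that by simp
    then show ?thesis
      by (metis of_nat_fact of_nat_mult)
  qed
  then show "coeff (map_poly of_int (f_int_poly n a c)) j = coeff (smult (fact (n + a)) (f_poly n a c)) j"
    by (simp add: coeff_map_poly coeff_f_int_poly f_poly_def coeff_sum coeff_monom)
qed

lemma degree_f_int_poly: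
  assumes "c n \<noteq> 0"
  shows "degree (f_int_poly n a c) = n" and "lead_coeff (f_int_poly n a c) = c n"
proof -
  show "degree (f_int_poly n a c) = n"
    using assms by (intro antisym degree_le le_degree) (auto simp: coeff_f_int_poly)
  then show "lead_coeff (f_int_poly n a c) = c n"
    by (simp add: coeff_f_int_poly)
qed

lemma prod_consecutive_split:
  fixes a j n :: nat
  assumes "j \<le> n"
  shows "\<Prod>{a + 1..n + a} = (\<Prod>i=1..j. a + i) * \<Prod>{j + a + 1..n + a}"
proof -
  have n: "j + a + (n - j) = n + a"
    using assms by simp
  have "\<Prod>{a + 1..j + a + (n - j)} = \<Prod>{a + 1..j + a} * \<Prod>{j + a + 1..j + a + (n - j)}"
    by (rule prod.ub_add_nat) simp
  then have "\<Prod>{a + 1..n + a} = \<Prod>{a + 1..j + a} * \<Prod>{j + a + 1..n + a}"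
    unfolding n .
  moreover have "\<Prod>{a + 1..j + a} = (\<Prod>i=1..j. a + i)"
    using prod.shift_bounds_cl_nat_ivl[of "\<lambda>i. i" 1 a j] by (simp add: add.commute)
  ultimately show ?thesis
    by simp
qed

lemma prime_dvd_coeff_f_int_poly:
  assumes "prime p" and "p dvd (\<Prod>i=1..k. a + n - k + i)" and "k \<le> n" and "j \<le> n - k"
  shows "int p dvd coeff (f_int_poly n a c) j"
proof -
  obtain i where i: "i \<in> {1..k}" and "p dvd a + n - k + i"
    using assms(1,2) by (auto simp: prime_dvd_prod_iff)
  moreover have "a + n - k + i \<in> {j + a + 1..n + a}"
    using i assms(3,4) by auto
  ultimately have "p dvd \<Prod>{j + a + 1..n + a}"
    by (meson dvd_prodI dvd_trans finite_atLeastAtMost)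
  then show ?thesis
    by (simp add: coeff_f_int_poly int_dvd_int_iff del: of_nat_prod)
qed

lemma multiplicity_coeff_f_int_poly:
  assumes "prime p" and "j \<le> n" and "c j \<noteq> 0"
  shows "multiplicity (int p) (coeff (f_int_poly n a c) j)
       = multiplicity (int p) (c j) + multiplicity p (\<Prod>{j + a + 1..n + a})"
proof -
  have "coeff (f_int_poly n a c) j = c j * int (\<Prod>{j + a + 1..n + a})"
    using assms(2) by (simp add: coeff_f_int_poly del: of_nat_prod)
  moreover have "int (\<Prod>{j + a + 1..n + a}) \<noteq> 0"
    by simp
  ultimately show ?thesis
    using assms(1,3) by (simp add: prime_elem_multiplicity_mult_distrib multiplicity_of_nat_int del: of_nat_prod)
qed

lemma newton_weight_f_int_poly_0_less:
  fixes p :: nat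
  assumes p: "prime p" "k + 2 \<le> p" and k: "1 \<le> k" and a: "0 < a" "int a \<notin> A_p k p"
    and c0: "\<not> int p dvd c 0" and j: "1 \<le> j" and nz: "coeff (f_int_poly n a c) j \<noteq> 0"
  shows "newton_weight (int p) k (f_int_poly n a c) 0 < newton_weight (int p) k (f_int_poly n a c) j"
proof -
  let ?F = "f_int_poly n a c"
  let ?t = "\<lambda>j. \<Prod>{j + a + 1..n + a}"
  have jn: "j \<le> n" and cj: "c j \<noteq> 0"
    using nz by (auto simp: coeff_f_int_poly split: if_splits)
  have "c 0 \<noteq> 0" using c0 by auto
  then have "multiplicity (int p) (coeff ?F 0) = multiplicity p (?t 0)"
    using multiplicity_coeff_f_int_poly[of p 0 n c a] p(1) c0 by (simp add: not_dvd_imp_multiplicity_0)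
  also have "\<dots> = multiplicity p (\<Prod>i=1..j. a + i) + multiplicity p (?t j)"
    using prod_consecutive_split[OF jn, of a] p by (simp add: prime_elem_multiplicity_mult_distrib)
  finally have v0: "multiplicity (int p) (coeff ?F 0) = multiplicity p (\<Prod>i=1..j. a + i) + multiplicity p (?t j)" .
  have "multiplicity p (?t j) \<le> multiplicity (int p) (coeff ?F j)"
    using multiplicity_coeff_f_int_poly[of p j n c a] p(1) jn cj by simp
  moreover have "k * multiplicity p (\<Prod>i=1..j. a + i) < j"
    using multiplicity_prod_consecutive_lt[OF p(1) k p(2) a j] .
  ultimately show ?thesis
    unfolding newton_weight_def v0 by (simp add: algebra_simps add_less_le_mono mult_le_mono2)
qed

lemma int_factor_of_f_poly:
  assumes "has_factor_of_degree (f_poly n a c) k"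
  obtains G H where "f_int_poly n a c = G * H" and "degree G = k"
proof -
  obtain g where g: "degree g = k" and "g dvd f_poly n a c"
    using assms unfolding has_factor_of_degree_def by blast
  then obtain h where "f_poly n a c = g * h"
    by (elim dvdE)
  then have "map_poly of_int (f_int_poly n a c) = smult (fact (n + a)) g * h"
    by (simp add: of_int_f_int_poly)
  from rat_to_int_factor[OF this] obtain G H
    where "f_int_poly n a c = G * H" and "degree G = degree (smult (fact (n + a) :: rat) g)"
    by blast
  with g show ?thesis
    using that by simp
qed

lemma no_factor_of_degree_if_not_in_A_p:
  fixes a n k p :: nat and c :: "nat \<Rightarrow> int"
  assumes a: "0 < a" and k: "1 \<le> k" "2 * k \<le> n"
    and p: "k + 2 \<le> p" "cond_C n k a c p" "int a \<notin> A_p k p"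
  shows "\<not> has_factor_of_degree (f_poly n a c) k"
proof
  let ?F = "f_int_poly n a c"
  assume "has_factor_of_degree (f_poly n a c) k"
  then obtain G H where FGH: "?F = G * H" and G: "degree G = k"
    by (rule int_factor_of_f_poly)
  define P where "P = int p"
  have pp: "prime p" and pdvd: "p dvd (\<Prod>i=1..k. a + n - k + i)" and c0n: "\<not> P dvd c 0" "\<not> P dvd c n"
    using p(2) unfolding cond_C_def P_def by auto
  have P: "prime P" "prime_elem P"
    using pp unfolding P_def by simp_all
  have "c n \<noteq> 0" using c0n by auto
  then have degF: "degree ?F = n" and lcF: "lead_coeff ?F = c n"
    by (rule degree_f_int_poly)+
  have "lead_coeff G * lead_coeff H = c n"
    using lcF FGH by (simp add: lead_coeff_mult)
  then have "\<not> P dvd lead_coeff G" and "\<not> P dvd lead_coeff H"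
    using c0n(2) by (metis dvd_mult2, metis dvd_mult)
  then have "G \<noteq> 0" and "H \<noteq> 0"
    by auto
  then have degH: "degree H = n - k"
    using FGH G degF by (simp add: degree_mult_eq)
  have "coeff ?F 0 \<noteq> 0"
    using c0n(1) by (auto simp: coeff_f_int_poly)
  then have G0: "coeff G 0 \<noteq> 0" and H0: "coeff H 0 \<noteq> 0"
    using FGH by (auto simp: coeff_mult_0)
  show False
  proof (cases "P dvd coeff G 0")
    case True
    then obtain j where "1 \<le> j" "coeff ?F j \<noteq> 0" "newton_weight P k ?F j \<le> newton_weight P k ?F 0"
      using coeff_mult_below_newton_slope[OF P(2) G k(1) \<open>\<not> P dvd lead_coeff G\<close> True G0 H0] FGH by auto
    then show False
      using newton_weight_f_int_poly_0_less[OF pp p(1) k(1) a p(3)] c0n(1) unfolding P_def by fastforce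
  next
    case False
    then obtain j where "j \<le> n - k" "\<not> P dvd coeff ?F j"
      using coeff_mult_not_dvd[OF P(1) False \<open>\<not> P dvd lead_coeff H\<close>] FGH degH by auto
    then show False
      using prime_dvd_coeff_f_int_poly[OF pp pdvd] k unfolding P_def by auto
  qed
qed

theorem corollary2p2:
  fixes a n k :: nat and c :: "nat \<Rightarrow> int"
  assumes "a > 0" and "1 \<le> k" and "2 * k \<le> n"
  shows "((\<exists>p. p > a + k \<and> cond_C n k a c p) \<longrightarrow> \<not> has_factor_of_degree (f_poly n a c) k)
    \<and> (\<forall>p. p \<ge> k + 2 \<and> cond_C n k a c p \<and> int a \<notin> A_p k p
            \<longrightarrow> \<not> has_factor_of_degree (f_poly n a c) k)
    \<and> (\<forall>Q. finite Q \<and> Q \<noteq> {} \<and> (\<forall>q\<in>Q. q \<ge> k + 2 \<and> cond_C n k a c q)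
            \<and> int a \<notin> (\<Inter>q\<in>Q. A_p k q)
            \<longrightarrow> \<not> has_factor_of_degree (f_poly n a c) k)"
proof (intro conjI allI impI)
  assume "\<exists>p. p > a + k \<and> cond_C n k a c p"
  then obtain p where "a + k < p" "cond_C n k a c p" by auto
  moreover have "k + 2 \<le> p" using \<open>a + k < p\<close> assms(1) by simp
  ultimately show "\<not> has_factor_of_degree (f_poly n a c) k"
    using no_factor_of_degree_if_not_in_A_p[OF assms] not_in_A_p_if_large assms(1,2) by blast
next
  fix p
  assume "k + 2 \<le> p \<and> cond_C n k a c p \<and> int a \<notin> A_p k p"
  then show "\<not> has_factor_of_degree (f_poly n a c) k"
    using no_factor_of_degree_if_not_in_A_p[OF assms] by blast
next
  fix Q
  assume Q: "finite Q \<and> Q \<noteq> {} \<and> (\<forall>q\<in>Q. k + 2 \<le> q \<and> cond_C n k a c q) \<and> int a \<notin> (\<Inter>q\<in>Q. A_p k q)"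
  then obtain q where "q \<in> Q" "int a \<notin> A_p k q" by auto
  then show "\<not> has_factor_of_degree (f_poly n a c) k"
    using no_factor_of_degree_if_not_in_A_p[OF assms] Q by blast
qed

end
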